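(* The following two identities hold: $$\sum_{k=1}^\infty\frac{(95k^2-84k+16)(9/8)^{k-1}}{k(3k-1)(3k-2)\binom{4k}k}=\frac{2\pi}{\sqrt3}$$ and $$\sum_{k=1}^\infty\frac{(5k^2-4k+1)8^{k}}{k(3k-1)(3k-2)\binom{4k}k}=\frac{3\pi}{2}.$$ *)

theory Defs
  imports "HOL-Analysis.Analysis"
begin

end

theory Submission
  imports Defs
begin

(* By the Beta integral, 1 / (k (3k-1) (3k-2) binom(4k,k)) and its companions are integrals over [0,1]
   of x^j (1-x)^l with j + l = 4k - 1, so each series is the moment sequence of a weight h(x) against the
   powers of u(x) = c x (1-x)^3, with c = 9/8 resp. c = 8.  As 0 <= u <= 27c/256 < 1 on [0,1], the
   geometric series may be summed under the integral, and the sum becomes the integral of the rational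
   function h / (1 - u), which has an elementary antiderivative: a logarithm plus arctangents. *)

lemma beta_integral_nat:
  fixes a b :: nat
  shows "((\<lambda>x::real. x ^ a * (1 - x) ^ b) has_integral (fact a * fact b / fact (a + b + 1))) {0..1}"
proof -
  have "Beta (real (a + 1)) (real (b + 1)) = fact a * fact b / fact (a + b + 1)"
    using Gamma_fact[of a, where 'a = real] Gamma_fact[of b, where 'a = real]
      Gamma_fact[of "a + b + 1", where 'a = real]
    by (simp add: Beta_def add_ac)
  then have "((\<lambda>x. x powr real a * (1 - x) powr real b) has_integral
               (fact a * fact b / fact (a + b + 1))) {0..1}"
    using has_integral_Beta_real[of "real (a + 1)" "real (b + 1)"] by simp
  then show ?thesis
    by (rule has_integral_spike_finite[where S = "{0, 1}", rotated 2]) (auto simp: powr_realpow)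
qed

lemma beta_values_central_binomial_4k:
  fixes n :: nat
  defines "k \<equiv> real (Suc n)"
  defines "D \<equiv> k * (3*k - 1) * (3*k - 2) * real (4 * Suc n choose Suc n)"
  shows "fact (n + 1) * fact (3*n + 2) / fact (4*n + 4) = (3*k - 1) * (3*k - 2) / (3 * D)"
    and "fact (n + 2) * fact (3*n + 1) / fact (4*n + 4) = (k + 1) * (3*k - 2) / (3 * D)"
    and "fact (n + 3) * fact (3*n) / fact (4*n + 4) = (k + 1) * (k + 2) / (3 * D)"
proof -
  define F :: real where "F = fact (n + 1) * fact (3 * n)"
  have "real (4 * Suc n choose Suc n) = fact (4 * Suc n) / (fact (Suc n) * fact (4 * Suc n - Suc n))"
    by (rule binomial_fact) simp
  then have "fact (4 * Suc n) = real (4 * Suc n choose Suc n) * (fact (Suc n) * fact (3 * Suc n))"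
    by (simp add: eq_divide_eq ac_simps del: fact_Suc)
  then have fact_4k: "fact (4*n + 4) = 3 * D * F"
    by (simp add: D_def F_def k_def numeral_eq_Suc algebra_simps)
  have facts:
    "fact (n + 1) * fact (3*n + 2) = (3*k - 1) * (3*k - 2) * F"
    "fact (n + 2) * fact (3*n + 1) = (k + 1) * (3*k - 2) * F"
    "fact (n + 3) * fact (3*n) = (k + 1) * (k + 2) * F"
    by (simp_all add: F_def k_def numeral_eq_Suc algebra_simps)
  have "F \<noteq> 0"
    by (simp add: F_def)
  then show "fact (n + 1) * fact (3*n + 2) / fact (4*n + 4) = (3*k - 1) * (3*k - 2) / (3 * D)"
    and "fact (n + 2) * fact (3*n + 1) / fact (4*n + 4) = (k + 1) * (3*k - 2) / (3 * D)"
    and "fact (n + 3) * fact (3*n) / fact (4*n + 4) = (k + 1) * (k + 2) / (3 * D)"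
    unfolding facts fact_4k by auto
qed

lemma has_integral_quartic_moment:
  fixes \<alpha> \<beta> \<gamma> c :: real and n :: nat
  defines "k \<equiv> real (Suc n)"
  shows "((\<lambda>x. 3 * x * (\<alpha> * (1 - x)^2 + \<beta> * x * (1 - x) + \<gamma> * x^2) * (c * x * (1 - x)^3) ^ n)
           has_integral
           c ^ n * (\<alpha> * (3*k - 1) * (3*k - 2) + \<beta> * (k + 1) * (3*k - 2) + \<gamma> * (k + 1) * (k + 2)) /
           (k * (3*k - 1) * (3*k - 2) * real (4 * Suc n choose Suc n))) {0..1}"
proof -
  define D where "D = k * (3*k - 1) * (3*k - 2) * real (4 * Suc n choose Suc n)"
  have "D > 0"
    by (simp add: D_def k_def)
  have exps: "n + 1 + (3*n + 2) + 1 = 4*n + 4" "n + 2 + (3*n + 1) + 1 = 4*n + 4"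
    "n + 3 + 3*n + 1 = 4*n + 4"
    by simp_all
  have beta_sum:
    "((\<lambda>x. c ^ n * 3 * (\<alpha> * (x^(n + 1) * (1 - x)^(3*n + 2))
                       + \<beta> * (x^(n + 2) * (1 - x)^(3*n + 1))
                       + \<gamma> * (x^(n + 3) * (1 - x)^(3*n)))) has_integral
      c ^ n * 3 * (\<alpha> * ((3*k - 1) * (3*k - 2) / (3 * D))
                 + \<beta> * ((k + 1) * (3*k - 2) / (3 * D))
                 + \<gamma> * ((k + 1) * (k + 2) / (3 * D)))) {0..1}"
    unfolding k_def D_def beta_values_central_binomial_4k[symmetric]
    by (intro has_integral_mult_right has_integral_add
        beta_integral_nat[of "n + 1" "3*n + 2", unfolded exps(1)]
        beta_integral_nat[of "n + 2" "3*n + 1", unfolded exps(2)]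
        beta_integral_nat[of "n + 3" "3*n", unfolded exps(3)])
  have integrand:
    "c ^ n * 3 * (\<alpha> * (x^(n + 1) * (1 - x)^(3*n + 2))
                + \<beta> * (x^(n + 2) * (1 - x)^(3*n + 1))
                + \<gamma> * (x^(n + 3) * (1 - x)^(3*n)))
      = 3 * x * (\<alpha> * (1 - x)^2 + \<beta> * x * (1 - x) + \<gamma> * x^2) * (c * x * (1 - x)^3) ^ n" for x :: real
  proof -
    have "(c * x * (1 - x)^3) ^ n = c ^ n * x ^ n * (1 - x) ^ (3*n)"
      by (simp add: power_mult_distrib power_mult)
    then show ?thesis
      by (simp add: power_add power2_eq_square power3_eq_cube algebra_simps)
  qed
  have moment_value:
    "c ^ n * 3 * (\<alpha> * ((3*k - 1) * (3*k - 2) / (3 * D))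
                + \<beta> * ((k + 1) * (3*k - 2) / (3 * D))
                + \<gamma> * ((k + 1) * (k + 2) / (3 * D)))
      = c ^ n * (\<alpha> * (3*k - 1) * (3*k - 2) + \<beta> * (k + 1) * (3*k - 2) + \<gamma> * (k + 1) * (k + 2)) / D"
    using \<open>D > 0\<close> by (simp add: field_simps)
  show ?thesis
    using beta_sum[unfolded integrand moment_value] unfolding D_def .
qed

lemma quartic_bounds_unit_interval:
  fixes x :: real
  assumes "x \<in> {0..1}"
  shows "0 \<le> x * (1 - x)^3" "x * (1 - x)^3 \<le> 27/256"
proof -
  show "0 \<le> x * (1 - x)^3"
    using assms by simp
  have "27/256 - x * (1 - x)^3 = ((1 - x) - 3/4)^2 * ((1 - x)^2 + (1 - x)/2 + 3/16)"
    by (simp add: field_simps power2_eq_square power3_eq_cube)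
  moreover have "0 \<le> ((1 - x) - 3/4)^2 * ((1 - x)^2 + (1 - x)/2 + 3/16)"
    using assms by (intro mult_nonneg_nonneg) auto
  ultimately show "x * (1 - x)^3 \<le> 27/256"
    by linarith
qed

lemma integral_geometric_remainder_tendsto_zero:
  fixes h u :: "real \<Rightarrow> real"
  assumes h_cont: "continuous_on {a..b} h" and u_cont: "continuous_on {a..b} u"
    and u_bound: "\<And>x. x \<in> {a..b} \<Longrightarrow> \<bar>u x\<bar> \<le> \<rho>" and "\<rho> < 1"
  shows "(\<lambda>N. integral {a..b} (\<lambda>x. h x * u x ^ N / (1 - u x))) \<longlonglongrightarrow> 0"
proof -
  define r where "r = max \<rho> 0"
  have r: "0 \<le> r" "r < 1" "\<And>x. x \<in> {a..b} \<Longrightarrow> \<bar>u x\<bar> \<le> r"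
    using \<open>\<rho> < 1\<close> u_bound by (auto simp: r_def le_max_iff_disj)
  obtain M where "0 < M" and M: "\<And>x. x \<in> {a..b} \<Longrightarrow> \<bar>h x\<bar> \<le> M"
    using compact_imp_bounded[OF compact_continuous_image[OF h_cont compact_Icc]]
    unfolding bounded_pos by (metis image_eqI real_norm_def)
  define K where "K = M / (1 - r) * Henstock_Kurzweil_Integration.content {a..b}"
  have bound: "\<bar>integral {a..b} (\<lambda>x. h x * u x ^ N / (1 - u x))\<bar> \<le> K * r ^ N" for N
  proof -
    have pointwise: "\<bar>h x * u x ^ N / (1 - u x)\<bar> \<le> M / (1 - r) * r ^ N" if x: "x \<in> {a..b}" for x
    proof -
      have "u x < 1"
        using r(2) r(3)[OF x] by linarith
      then have "\<bar>h x * u x ^ N / (1 - u x)\<bar> = \<bar>h x\<bar> * \<bar>u x\<bar> ^ N / (1 - u x)"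
        by (simp add: abs_mult power_abs)
      also have "\<dots> \<le> M * r ^ N / (1 - r)"
        using r M[OF x] x by (intro frac_le mult_mono power_mono) (auto simp: abs_le_iff)
      finally show ?thesis by simp
    qed
    have "(\<lambda>x. h x * u x ^ N / (1 - u x)) integrable_on {a..b}"
      using r(2) r(3) by (intro integrable_continuous_interval continuous_intros h_cont u_cont)
        (fastforce simp: abs_le_iff)
    then have "norm (integral {a..b} (\<lambda>x. h x * u x ^ N / (1 - u x)))
        \<le> M / (1 - r) * r ^ N * Henstock_Kurzweil_Integration.content {a..b}"
      using pointwise \<open>0 < M\<close> r
      by (intro has_integral_bound_real[OF _ _ integrable_integral, where S = "{}"]) auto
    then show ?thesis
      by (simp add: K_def mult_ac)
  qed
  have "(\<lambda>N. K * r ^ N) \<longlonglongrightarrow> 0"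
    using r by (intro tendsto_mult_right_zero LIMSEQ_power_zero) auto
  then show ?thesis
    by (rule Lim_null_comparison[rotated]) (intro always_eventually allI, simp add: bound)
qed

lemma sums_integral_geometric:
  fixes h u :: "real \<Rightarrow> real" and f :: "nat \<Rightarrow> real"
  assumes moments: "\<And>n. ((\<lambda>x. h x * u x ^ n) has_integral f n) {a..b}"
    and h_cont: "continuous_on {a..b} h" and u_cont: "continuous_on {a..b} u"
    and u_bound: "\<And>x. x \<in> {a..b} \<Longrightarrow> \<bar>u x\<bar> \<le> \<rho>" and "\<rho> < 1"
    and I: "((\<lambda>x. h x / (1 - u x)) has_integral I) {a..b}"
  shows "f sums I"
proof -
  define rest where "rest N x = h x * u x ^ N / (1 - u x)" for N x
  have u_lt_1: "u x < 1" if "x \<in> {a..b}" for x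
    using u_bound[OF that] \<open>\<rho> < 1\<close> by linarith
  have partial_sums: "(\<Sum>n<N. f n) = I - integral {a..b} (rest N)" for N
  proof (rule has_integral_unique)
    show "((\<lambda>x. \<Sum>n<N. h x * u x ^ n) has_integral (\<Sum>n<N. f n)) {a..b}"
      by (intro has_integral_sum moments) auto
    have "(rest N has_integral integral {a..b} (rest N)) {a..b}"
      unfolding rest_def using u_lt_1
      by (intro integrable_integral integrable_continuous_interval continuous_intros h_cont u_cont)
        fastforce
    moreover have "(\<Sum>n<N. h x * u x ^ n) = h x / (1 - u x) - rest N x" if "x \<in> {a..b}" for x
      using u_lt_1[OF that]
      by (simp add: rest_def sum_distrib_left[symmetric] sum_gp_strict diff_divide_distrib
          right_diff_distrib)
    ultimately show "((\<lambda>x. \<Sum>n<N. h x * u x ^ n) has_integral (I - integral {a..b} (rest N))) {a..b}"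
      by (intro has_integral_eq[OF _ has_integral_diff[OF I]]) auto
  qed
  have "(\<lambda>N. integral {a..b} (rest N)) \<longlonglongrightarrow> 0"
    unfolding rest_def by (rule integral_geometric_remainder_tendsto_zero) fact+
  then have "(\<lambda>N. I - integral {a..b} (rest N)) \<longlonglongrightarrow> I"
    using tendsto_diff[OF tendsto_const] by fastforce
  then show ?thesis
    unfolding sums_def partial_sums .
qed

lemma quartic_moment_series_sums:
  fixes \<alpha> \<beta> \<gamma> c I :: real
  assumes "\<bar>c\<bar> < 256/27"
    and "((\<lambda>x. 3 * x * (\<alpha> * (1 - x)^2 + \<beta> * x * (1 - x) + \<gamma> * x^2) / (1 - c * x * (1 - x)^3))
           has_integral I) {0..1}"
  shows "(\<lambda>n. let k = real (Suc n) in
            c ^ n * (\<alpha> * (3*k - 1) * (3*k - 2) + \<beta> * (k + 1) * (3*k - 2) + \<gamma> * (k + 1) * (k + 2)) /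
            (k * (3*k - 1) * (3*k - 2) * real (4 * Suc n choose Suc n))) sums I"
proof (rule sums_integral_geometric[where u = "\<lambda>x. c * x * (1 - x)^3" and \<rho> = "\<bar>c\<bar> * (27/256)"])
  show "\<bar>c * x * (1 - x)^3\<bar> \<le> \<bar>c\<bar> * (27/256)" if "x \<in> {0..1}" for x
    using quartic_bounds_unit_interval[OF that]
    by (simp add: abs_mult mult.assoc mult_left_mono)
  show "((\<lambda>x. 3 * x * (\<alpha> * (1 - x)^2 + \<beta> * x * (1 - x) + \<gamma> * x^2) * (c * x * (1 - x)^3) ^ n)
          has_integral (let k = real (Suc n) in
            c ^ n * (\<alpha> * (3*k - 1) * (3*k - 2) + \<beta> * (k + 1) * (3*k - 2) + \<gamma> * (k + 1) * (k + 2)) /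
            (k * (3*k - 1) * (3*k - 2) * real (4 * Suc n choose Suc n)))) {0..1}" for n
    unfolding Let_def by (rule has_integral_quartic_moment)
qed (use assms in \<open>auto intro!: continuous_intros\<close>)

lemma has_integral_of_real_derivative:
  fixes F f :: "real \<Rightarrow> real"
  assumes "a \<le> b" "\<And>x. x \<in> {a..b} \<Longrightarrow> (F has_real_derivative f x) (at x)"
  shows "(f has_integral (F b - F a)) {a..b}"
  using assms by (intro fundamental_theorem_of_calculus)
    (auto simp flip: has_real_derivative_iff_has_vector_derivative intro: has_field_derivative_at_within)

lemma DERIV_ln_one_minus_quartic:
  fixes c x :: real
  assumes "1 - c * x * (1 - x)^3 > 0"
  shows "((\<lambda>x. ln (1 - c * x * (1 - x)^3)) has_real_derivative
          c * (1 - x)^2 * (4*x - 1) / (1 - c * x * (1 - x)^3)) (at x)"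
proof -
  have "((\<lambda>x. 1 - c * x * (1 - x)^3) has_real_derivative c * (1 - x)^2 * (4*x - 1)) (at x)"
    by (rule derivative_eq_intros refl)+ (simp add: field_simps power2_eq_square power3_eq_cube)
  from DERIV_chain2[OF DERIV_ln_divide[OF assms] this] show ?thesis
    by (simp add: mult.commute)
qed

lemma quartic_rational_9_8_has_integral:
  "((\<lambda>x. 3*x*(39/4*(1-x)^2 + 9/4*x*(1-x) + 1/2*x^2) / (1 - 9/8*x*(1-x)^3)) has_integral 2*pi/sqrt 3)
     {0..1::real}"
proof -
  define D where "D x = 1 - 9/8*x*(1-x)^3" for x :: real
  define F where "F x = 16/3 * ln (D x) + 2 * sqrt 3 * arctan (sqrt 3 * x)" for x
  have "(F has_real_derivative 3*x*(39/4*(1-x)^2 + 9/4*x*(1-x) + 1/2*x^2) / D x) (at x)"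
    if "x \<in> {0..1}" for x
  proof -
    have "D x > 0"
      using quartic_bounds_unit_interval[OF that] by (simp add: D_def)
    then have log: "((\<lambda>x. ln (D x)) has_real_derivative 9/8*(1-x)^2*(4*x-1) / D x) (at x)"
      unfolding D_def by (rule DERIV_ln_one_minus_quartic)
    have "8 * D x = (1 + 3*x^2) * (3*x^2 - 9*x + 8)"
      unfolding D_def by algebra
    then have "6 / (1 + 3*x^2) = 3/4 * (3*x^2 - 9*x + 8) / D x"
      using \<open>D x > 0\<close> add_pos_nonneg[of 1 "3*x^2"] by (simp add: field_simps)
    moreover have "((\<lambda>x. 2 * sqrt 3 * arctan (sqrt 3 * x)) has_real_derivative 6 / (1 + 3*x^2)) (at x)"
      by (auto intro!: derivative_eq_intros simp: power_mult_distrib divide_inverse mult_ac)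
    ultimately have atan: "((\<lambda>x. 2 * sqrt 3 * arctan (sqrt 3 * x)) has_real_derivative
                             3/4 * (3*x^2 - 9*x + 8) / D x) (at x)"
      by simp
    have "16/3 * (9/8*(1-x)^2*(4*x-1) / D x) + 3/4 * (3*x^2 - 9*x + 8) / D x
        = (16/3 * (9/8*(1-x)^2*(4*x-1)) + 3/4 * (3*x^2 - 9*x + 8)) / D x"
      by (simp only: times_divide_eq_right add_divide_distrib)
    also have "16/3 * (9/8*(1-x)^2*(4*x-1)) + 3/4 * (3*x^2 - 9*x + 8)
        = 3*x*(39/4*(1-x)^2 + 9/4*x*(1-x) + 1/2*x^2)"
      by algebra
    finally show ?thesis
      unfolding F_def by (rule DERIV_cong[OF DERIV_add[OF DERIV_cmult[OF log] atan]])
  qed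
  then have integral: "((\<lambda>x. 3*x*(39/4*(1-x)^2 + 9/4*x*(1-x) + 1/2*x^2) / D x) has_integral F 1 - F 0) {0..1}"
    by (intro has_integral_of_real_derivative) auto
  have "arctan (sqrt 3) = pi / 3"
    using arctan_tan[of "pi / 3"] by (simp add: tan_60)
  then have "F 1 - F 0 = 2 * sqrt 3 * (pi / 3)"
    by (simp add: F_def D_def)
  also have "\<dots> = 2 * pi / sqrt 3"
    by (simp add: field_simps)
  finally show ?thesis
    using integral by (simp add: D_def)
qed

lemma DERIV_arctan_quotient:
  fixes f g :: "real \<Rightarrow> real"
  assumes "(f has_real_derivative f') (at x)" "(g has_real_derivative g') (at x)" "g x \<noteq> 0"
  shows "((\<lambda>x. arctan (f x / g x)) has_real_derivative (f' * g x - f x * g') / (f x ^ 2 + g x ^ 2)) (at x)"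
proof (rule DERIV_cong)
  show "((\<lambda>x. arctan (f x / g x)) has_real_derivative
          inverse (1 + (f x / g x)^2) * ((f' * g x - f x * g') / (g x * g x))) (at x)"
    by (rule DERIV_chain2[OF DERIV_arctan DERIV_divide[OF assms]])
  have "inverse (1 + (f x / g x)^2) = g x ^ 2 / (f x ^ 2 + g x ^ 2)"
    using assms(3) by (simp add: field_simps)
  then show "inverse (1 + (f x / g x)^2) * ((f' * g x - f x * g') / (g x * g x))
      = (f' * g x - f x * g') / (f x ^ 2 + g x ^ 2)"
    using assms(3) by (simp add: power2_eq_square)
qed

lemma DERIV_ln_plus_angle_quartic_8:
  fixes \<phi> :: "real \<Rightarrow> real" and x :: real
  assumes "x \<in> {0..1}"
    and \<phi>: "(\<phi> has_real_derivative 2 * (2*x^2 - 2*x + 1) / (1 - 8*x*(1-x)^3)) (at x)"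
  shows "((\<lambda>x. 3/8 * ln (1 - 8*x*(1-x)^3) + 3/2 * \<phi> x) has_real_derivative
           3*x*(4*(1-x)^2 + x*(1-x) + x^2) / (1 - 8*x*(1-x)^3)) (at x)"
proof (rule DERIV_cong)
  have "1 - 8*x*(1-x)^3 > 0"
    using quartic_bounds_unit_interval[OF assms(1)] by simp
  from DERIV_ln_one_minus_quartic[OF this]
  show "((\<lambda>x. 3/8 * ln (1 - 8*x*(1-x)^3) + 3/2 * \<phi> x) has_real_derivative
      3/8 * (8*(1-x)^2*(4*x-1) / (1 - 8*x*(1-x)^3)) + 3/2 * (2 * (2*x^2 - 2*x + 1) / (1 - 8*x*(1-x)^3)))
      (at x)"
    by (intro DERIV_add DERIV_cmult \<phi>)
  have "3/8 * (8*(1-x)^2*(4*x-1)) + 3/2 * (2 * (2*x^2 - 2*x + 1)) = 3*x*(4*(1-x)^2 + x*(1-x) + x^2)"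
    by algebra
  then show "3/8 * (8*(1-x)^2*(4*x-1) / (1 - 8*x*(1-x)^3)) + 3/2 * (2 * (2*x^2 - 2*x + 1) / (1 - 8*x*(1-x)^3))
      = 3*x*(4*(1-x)^2 + x*(1-x) + x^2) / (1 - 8*x*(1-x)^3)"
    by (simp only: times_divide_eq_right add_divide_distrib[symmetric])
qed

(* 1 - 8x(1-x)^3 = A^2 + B^2 with A = 2x^2 - 4x + 1 and B = 2x^2 - 2x, and the derivative required
   above is that of the angle arg (B + iA); up to constants this angle is arctan (A/B) where B \<noteq> 0
   and -arctan (B/A) where A \<noteq> 0. *)
lemma DERIV_ln_arctan_branches:
  fixes x :: real
  assumes "x \<in> {0..1}"
  defines "g \<equiv> 3*x*(4*(1-x)^2 + x*(1-x) + x^2) / (1 - 8*x*(1-x)^3)"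
  shows "2*x^2 - 4*x + 1 \<noteq> 0 \<Longrightarrow>
      ((\<lambda>x. 3/8 * ln (1 - 8*x*(1-x)^3) + 3/2 * - arctan ((2*x^2 - 2*x) / (2*x^2 - 4*x + 1)))
         has_real_derivative g) (at x)"
    and "2*x^2 - 2*x \<noteq> 0 \<Longrightarrow>
      ((\<lambda>x. 3/8 * ln (1 - 8*x*(1-x)^3) + 3/2 * arctan ((2*x^2 - 4*x + 1) / (2*x^2 - 2*x)))
         has_real_derivative g) (at x)"
proof -
  define A where "A x = 2*x^2 - 4*x + 1" for x :: real
  define B where "B x = 2*x^2 - 2*x" for x :: real
  have sum_squares: "1 - 8*x*(1-x)^3 = A x ^ 2 + B x ^ 2"
    unfolding A_def B_def by algebra
  have dA: "(A has_real_derivative 4*x - 4) (at x)" and dB: "(B has_real_derivative 4*x - 2) (at x)"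
    unfolding A_def B_def by (auto intro!: derivative_eq_intros)
  show "((\<lambda>x. 3/8 * ln (1 - 8*x*(1-x)^3) + 3/2 * - arctan ((2*x^2 - 2*x) / (2*x^2 - 4*x + 1)))
          has_real_derivative g) (at x)" if "2*x^2 - 4*x + 1 \<noteq> 0"
  proof -
    have "A x \<noteq> 0"
      using that by (simp add: A_def)
    have "- (((4*x - 2) * A x - B x * (4*x - 4)) / (B x ^ 2 + A x ^ 2))
        = 2 * (2*x^2 - 2*x + 1) / (1 - 8*x*(1-x)^3)"
      unfolding sum_squares add.commute[of "B x ^ 2"]
      by (simp add: A_def B_def minus_divide_left) algebra
    from DERIV_cong[OF DERIV_minus[OF DERIV_arctan_quotient[OF dB dA \<open>A x \<noteq> 0\<close>]] this]
    show ?thesis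
      unfolding g_def A_def B_def by (rule DERIV_ln_plus_angle_quartic_8[OF assms(1)])
  qed
  show "((\<lambda>x. 3/8 * ln (1 - 8*x*(1-x)^3) + 3/2 * arctan ((2*x^2 - 4*x + 1) / (2*x^2 - 2*x)))
          has_real_derivative g) (at x)" if "2*x^2 - 2*x \<noteq> 0"
  proof -
    have "B x \<noteq> 0"
      using that by (simp add: B_def)
    have "((4*x - 4) * B x - A x * (4*x - 2)) / (A x ^ 2 + B x ^ 2)
        = 2 * (2*x^2 - 2*x + 1) / (1 - 8*x*(1-x)^3)"
      unfolding sum_squares by (simp add: A_def B_def) algebra
    from DERIV_cong[OF DERIV_arctan_quotient[OF dA dB \<open>B x \<noteq> 0\<close>] this]
    show ?thesis
      unfolding g_def A_def B_def by (rule DERIV_ln_plus_angle_quartic_8[OF assms(1)])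
  qed
qed

(* The branch with arctan (B/A) breaks down at x = 1 - 1/sqrt 2, the one with arctan (A/B) at both
   endpoints, so [0,1] is cut at 1/4 and 1/2. *)
lemma quartic_rational_8_has_integral:
  "((\<lambda>x. 3*x*(4*(1-x)^2 + x*(1-x) + x^2) / (1 - 8*x*(1-x)^3)) has_integral 3*pi/2) {0..1::real}"
proof -
  define g where "g x = 3*x*(4*(1-x)^2 + x*(1-x) + x^2) / (1 - 8*x*(1-x)^3)" for x :: real
  define G where "G x = 3/8 * ln (1 - 8*x*(1-x)^3) + 3/2 * - arctan ((2*x^2 - 2*x) / (2*x^2 - 4*x + 1))"
    for x :: real
  define H where "H x = 3/8 * ln (1 - 8*x*(1-x)^3) + 3/2 * arctan ((2*x^2 - 4*x + 1) / (2*x^2 - 2*x))"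
    for x :: real
  have "(G has_real_derivative g x) (at x)" if "x \<in> {0..1/4} \<union> {1/2..1}" for x
  proof -
    have "(3/4)^2 \<le> (1 - x)^2 \<or> (1 - x)^2 \<le> (1/2)^2"
      using that by (auto intro: power_mono)
    then have "2*x^2 - 4*x + 1 \<noteq> 0"
      by (auto simp: algebra_simps power2_eq_square)
    then show ?thesis
      using DERIV_ln_arctan_branches(1)[of x] that unfolding G_def g_def by auto
  qed
  moreover have "(H has_real_derivative g x) (at x)" if "x \<in> {1/4..1/2}" for x
  proof -
    have "2*x^2 - 2*x \<noteq> 0"
      using that by (simp add: power2_eq_square algebra_simps)
    then show ?thesis
      using DERIV_ln_arctan_branches(2)[of x] that unfolding H_def g_def by auto
  qed
  ultimately have "(g has_integral G (1/4) - G 0) {0..1/4}" "(g has_integral H (1/2) - H (1/4)) {1/4..1/2}"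
    "(g has_integral G 1 - G (1/2)) {1/2..1}"
    by (auto intro!: has_integral_of_real_derivative)
  then have "(g has_integral (G (1/4) - G 0) + (H (1/2) - H (1/4)) + (G 1 - G (1/2))) {0..1}"
    by (intro has_integral_combine[of 0 "1/2" 1] has_integral_combine[of 0 "1/4" "1/2"]) auto
  moreover have "(G (1/4) - G 0) + (H (1/2) - H (1/4)) + (G 1 - G (1/2))
      = 3/2 * (arctan 3 + arctan (1/3) + pi/2)"
    by (simp add: G_def H_def arctan_one arctan_minus power2_eq_square)
  moreover have "arctan 3 + arctan (1/3) = pi/2"
    using arctan_inverse[of 3] by simp
  ultimately have "(g has_integral 3*pi/2) {0..1}"
    by simp
  then show ?thesis
    by (simp add: g_def[abs_def])
qed

theorem theorem1p1:
  shows "(\<lambda>n. let k = real (Suc n) in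
            (95 * k^2 - 84 * k + 16) * (9/8) ^ n /
            (k * (3*k - 1) * (3*k - 2) * real (4 * Suc n choose Suc n)))
           sums (2 * pi / sqrt 3) \<and>
         (\<lambda>n. let k = real (Suc n) in
            (5 * k^2 - 4 * k + 1) * 8 ^ Suc n /
            (k * (3*k - 1) * (3*k - 2) * real (4 * Suc n choose Suc n)))
           sums (3 * pi / 2)"
proof
  have numerator_9_8:
    "39/4*(3*k - 1)*(3*k - 2) + 9/4*(k + 1)*(3*k - 2) + 1/2*(k + 1)*(k + 2) = 95*k^2 - 84*k + 16"
    for k :: real
    by algebra
  have numerator_8: "8 ^ n * (4*(3*k - 1)*(3*k - 2) + (k + 1)*(3*k - 2) + (k + 1)*(k + 2))
      = (5*k^2 - 4*k + 1) * 8 ^ Suc n" for k :: real and n :: nat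
    unfolding power_Suc by algebra
  have integral_8: "((\<lambda>x. 3*x*(4*(1-x)^2 + 1*x*(1-x) + 1*x^2) / (1 - 8*x*(1-x)^3)) has_integral 3*pi/2)
      {0..1}"
    using quartic_rational_8_has_integral by simp
  show "(\<lambda>n. let k = real (Suc n) in
            (95 * k^2 - 84 * k + 16) * (9/8) ^ n /
            (k * (3*k - 1) * (3*k - 2) * real (4 * Suc n choose Suc n)))
           sums (2 * pi / sqrt 3)"
    using quartic_moment_series_sums[OF _ quartic_rational_9_8_has_integral]
    unfolding Let_def numerator_9_8 by (simp add: mult.commute)
  show "(\<lambda>n. let k = real (Suc n) in
            (5 * k^2 - 4 * k + 1) * 8 ^ Suc n /
            (k * (3*k - 1) * (3*k - 2) * real (4 * Suc n choose Suc n)))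
           sums (3 * pi / 2)"
    using quartic_moment_series_sums[OF _ integral_8] unfolding Let_def mult_1 numerator_8 by simp
qed

end
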